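(* Let $(B,\cdot)$ be an algebra over a field $\mathbb K$ of characteristic $0$ which is $\rho$-associative, i.e. $(b_1 b_2) b_3 - b_3 (b_1 b_2)=0$ for all $b_1,b_2,b_3\in B$. Then the bracket $[x,y]=xy-yx$ makes $B$ an Acaa-algebra, and $(B,[\cdot,\cdot])$ is also a $2$-step nilpotent Lie algebra (i.e. $[[x,y],z]=0$ for all $x,y,z\in B$).
   Context: An Acaa-algebra over a field $\mathbb K$ of characteristic $0$ is a $\mathbb K$-vector space $A$ with a bilinear product $[\cdot,\cdot]$ which is anticommutative, $[x,y]=-[y,x]$, and satisfies $[x_1,[x_2,x_3]]=[x_2,[x_3,x_1]]$ for all $x_1,x_2,x_3\in A$. An algebra here is a vector space with a bilinear (not necessarily associative) product. *)

theory Defs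
  imports Main "HOL.Vector_Spaces"
begin

definition bilinear_op :: "('k::field \<Rightarrow> 'b::ab_group_add \<Rightarrow> 'b) \<Rightarrow> ('b \<Rightarrow> 'b \<Rightarrow> 'b) \<Rightarrow> bool" where
  "bilinear_op s m \<longleftrightarrow>
     (\<forall>x y z. m (x + y) z = m x z + m y z \<and> m x (y + z) = m x y + m x z) \<and>
     (\<forall>c x y. m (s c x) y = s c (m x y) \<and> m x (s c y) = s c (m x y))"

definition algebra_over :: "('k::field \<Rightarrow> 'b::ab_group_add \<Rightarrow> 'b) \<Rightarrow> ('b \<Rightarrow> 'b \<Rightarrow> 'b) \<Rightarrow> bool" where
  "algebra_over s m \<longleftrightarrow> vector_space s \<and> bilinear_op s m"

definition rho_associative :: "('b::ab_group_add \<Rightarrow> 'b \<Rightarrow> 'b) \<Rightarrow> bool" where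
  "rho_associative m \<longleftrightarrow> (\<forall>b1 b2 b3. m (m b1 b2) b3 - m b3 (m b1 b2) = 0)"

definition commutator :: "('b::ab_group_add \<Rightarrow> 'b \<Rightarrow> 'b) \<Rightarrow> 'b \<Rightarrow> 'b \<Rightarrow> 'b" where
  "commutator m x y = m x y - m y x"

definition acaa_algebra :: "('k::field \<Rightarrow> 'b::ab_group_add \<Rightarrow> 'b) \<Rightarrow> ('b \<Rightarrow> 'b \<Rightarrow> 'b) \<Rightarrow> bool" where
  "acaa_algebra s br \<longleftrightarrow> algebra_over s br \<and>
     (\<forall>x y. br x y = - br y x) \<and>
     (\<forall>x1 x2 x3. br x1 (br x2 x3) = br x2 (br x3 x1))"

definition lie_algebra :: "('k::field \<Rightarrow> 'b::ab_group_add \<Rightarrow> 'b) \<Rightarrow> ('b \<Rightarrow> 'b \<Rightarrow> 'b) \<Rightarrow> bool" where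
  "lie_algebra s br \<longleftrightarrow> algebra_over s br \<and>
     (\<forall>x. br x x = 0) \<and>
     (\<forall>x y z. br x (br y z) + br y (br z x) + br z (br x y) = 0)"

definition two_step_nilpotent_lie_algebra :: "('k::field \<Rightarrow> 'b::ab_group_add \<Rightarrow> 'b) \<Rightarrow> ('b \<Rightarrow> 'b \<Rightarrow> 'b) \<Rightarrow> bool" where
  "two_step_nilpotent_lie_algebra s br \<longleftrightarrow> lie_algebra s br \<and> (\<forall>x y z. br (br x y) z = 0)"

end

theory Submission
  imports Defs
begin

text \<open>By \<open>\<rho>\<close>-associativity every product \<open>b\<^sub>1 b\<^sub>2\<close> is central, hence so is every
commutator \<open>xy - yx\<close>, being a difference of products. Thus all brackets of a commutator
with anything vanish: the commutator bracket is a two-step nilpotent Lie bracket, and in a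
two-step nilpotent Lie algebra both sides of the Acaa identity are zero.\<close>

lemma bilinear_op_diff_left:
  assumes "bilinear_op s m"
  shows "m (x - y) z = m x z - m y z"
proof -
  have "m (x - y) z + m y z = m x z"
    using assms unfolding bilinear_op_def by (metis diff_add_cancel)
  then show ?thesis by (simp add: eq_diff_eq)
qed

lemma bilinear_op_diff_right:
  assumes "bilinear_op s m"
  shows "m x (y - z) = m x y - m x z"
proof -
  have "m x (y - z) + m x z = m x y"
    using assms unfolding bilinear_op_def by (metis diff_add_cancel)
  then show ?thesis by (simp add: eq_diff_eq)
qed

lemma bilinear_op_alternating_imp_anticommute:
  assumes "bilinear_op s br" and "\<And>x. br x x = 0"
  shows "br x y = - br y x"
proof -
  have "br (x + y) (x + y) = br x x + br x y + (br y x + br y y)"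
    using assms(1) unfolding bilinear_op_def by (simp add: add.assoc)
  then have "br x y + br y x = 0" using assms(2) by simp
  then show ?thesis by (simp add: eq_neg_iff_add_eq_0)
qed

lemma bilinear_op_commutator:
  assumes "module s" and "bilinear_op s m"
  shows "bilinear_op s (commutator m)"
proof -
  have "s c (a - b) = s c a - s c b" for c a b
    using assms(1) by (rule module.scale_right_diff_distrib)
  with assms(2) show ?thesis
    unfolding bilinear_op_def commutator_def by (simp add: algebra_simps)
qed

lemma algebra_over_commutator:
  "algebra_over s m \<Longrightarrow> algebra_over s (commutator m)"
  unfolding algebra_over_def
  by (simp add: bilinear_op_commutator module_iff_vector_space)

lemma commutator_self: "commutator m x x = 0"
  unfolding commutator_def by simp

lemma rho_associative_imp_commutator_commutator_eq_0:
  assumes "bilinear_op s m" and "rho_associative m"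
  shows "commutator m (commutator m x y) z = 0"
proof -
  have central: "m (m a b) c = m c (m a b)" for a b c
    using assms(2) unfolding rho_associative_def by simp
  show ?thesis
    unfolding commutator_def
    by (simp add: bilinear_op_diff_left[OF assms(1)] bilinear_op_diff_right[OF assms(1)] central)
qed

lemma bilinear_op_alternating_nilpotent_right:
  assumes "bilinear_op s br" and "\<And>x. br x x = 0" and "\<And>x y z. br (br x y) z = 0"
  shows "br x (br y z) = 0"
proof -
  have "br x (br y z) = - br (br y z) x"
    using assms(1,2) by (rule bilinear_op_alternating_imp_anticommute)
  then show ?thesis using assms(3) by simp
qed

lemma two_step_nilpotent_lie_algebraI:
  assumes "algebra_over s br" and "\<And>x. br x x = 0" and "\<And>x y z. br (br x y) z = 0"
  shows "two_step_nilpotent_lie_algebra s br"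
proof -
  have "bilinear_op s br" using assms(1) unfolding algebra_over_def by simp
  then have "br x (br y z) = 0" for x y z
    using assms(2,3) by (rule bilinear_op_alternating_nilpotent_right)
  with assms show ?thesis
    unfolding two_step_nilpotent_lie_algebra_def lie_algebra_def by simp
qed

lemma two_step_nilpotent_lie_algebra_imp_acaa_algebra:
  assumes "two_step_nilpotent_lie_algebra s br"
  shows "acaa_algebra s br"
proof -
  have alg: "algebra_over s br" and alt: "\<And>x. br x x = 0" and nil: "\<And>x y z. br (br x y) z = 0"
    using assms unfolding two_step_nilpotent_lie_algebra_def lie_algebra_def by simp_all
  have bil: "bilinear_op s br" using alg unfolding algebra_over_def by simp
  have "br x y = - br y x" for x y
    using bil alt by (rule bilinear_op_alternating_imp_anticommute)
  moreover have "br x (br y z) = 0" for x y z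
    using bil alt nil by (rule bilinear_op_alternating_nilpotent_right)
  ultimately show ?thesis
    unfolding acaa_algebra_def using alg by metis
qed

theorem mainTheorem9:
  fixes s :: "'k::field_char_0 \<Rightarrow> 'b::ab_group_add \<Rightarrow> 'b"
    and m :: "'b \<Rightarrow> 'b \<Rightarrow> 'b"
  assumes "algebra_over s m"
    and "rho_associative m"
  shows "acaa_algebra s (commutator m) \<and> two_step_nilpotent_lie_algebra s (commutator m)"
proof -
  have "bilinear_op s m" using assms(1) unfolding algebra_over_def by simp
  then have "two_step_nilpotent_lie_algebra s (commutator m)"
    using algebra_over_commutator[OF assms(1)] assms(2)
    by (intro two_step_nilpotent_lie_algebraI)
      (simp_all add: commutator_self rho_associative_imp_commutator_commutator_eq_0)
  then show ?thesis
    using two_step_nilpotent_lie_algebra_imp_acaa_algebra by blast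
qed

end
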